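(* Let $A$ be a circular $m\times n$ matrix and let $b\in\mathbb{Z}_+^m$. Then $Q^*(A,b)$ is equal to the set of points $x\in\mathbb{R}^n$ satisfying $Ax\ge b$, $x\ge 0$, and all $\Gamma$-inequalities (with respect to $b$) for the circuits $\Gamma$ of $D(A)$ such that $p(\Gamma)\ge 2$ and $p(\Gamma)$ does not divide $t(\Gamma,b)$.
   Context: Notation: $[n]=\{1,\dots,n\}$ with addition modulo $n$ (index $0$ is identified with $n$). For $a,c\in[n]$, let $t\ge 0$ be minimal with $a+t\equiv c \pmod n$; then $[a,c]_n=\{a,a+1,\dots,a+t\}$ (mod $n$), $[a,c)_n=[a,c]_n\setminus\{c\}$, $(a,c]_n=[a,c]_n\setminus\{a\}$, $(a,c)_n=[a,c]_n\setminus\{a,c\}$. An $m\times n$ $\{0,1\}$-matrix $A$ (rows indexed by $[m]$, columns by $[n]$) is circular if for each row $i$ there are $\ell_i\in[n]$ and an integer $k_i$ with $2\le k_i\le n-1$ such that row $i$ is the incidence vector of $[\ell_i,\ell_i+k_i)_n$. For $b\in\mathbb{Z}_+^m$: $Q(A,b)=\{x\in\mathbb{R}^n: Ax\ge b,\ x\ge 0\}$ and $Q^*(A,b)=\operatorname{conv}(Q(A,b)\cap\mathbb{Z}^n)$. The digraph $D(A)$ (multigraph allowed) has node set $[n]$ (node labels mod $n$) and four arc sets: forward row arcs $a_i=(\ell_i-1,\ell_i+k_i-1)$, $i\in[m]$; forward short arcs $a_{m+j}=(j-1,j)$, $j\in[n]$; reverse row arcs $\bar a_i=(\ell_i+k_i-1,\ell_i-1)$,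 $i\in[m]$; reverse short arcs $\bar a_{m+j}=(j,j-1)$, $j\in[n]$. Lengths: $l(a_i)=k_i$, $l(\bar a_i)=-k_i$, forward short arcs have length $1$, reverse short arcs length $-1$. A circuit is a simple directed circuit; for a closed directed path $\Gamma$, its winding number $p(\Gamma)$ is the integer with $p(\Gamma)\,n=\sum_{a\in E(\Gamma)}l(a)$. A forward row arc $a_i$ jumps over node $j$ iff $j\in[\ell_i,\ell_i+k_i)_n$; the forward short arc $(j-1,j)$ jumps over node $j$ only; a reverse arc $\bar a_k$ jumps over $j$ iff $a_k$ does. $p^-(\Gamma,j)$ is the number of reverse arcs of $\Gamma$ jumping over $j$. For a circuit $\Gamma$: $t(\Gamma,b)=\sum_{i\in[m]:a_i\in E(\Gamma)}b_i-\sum_{i\in[m]:\bar a_i\in E(\Gamma)}b_i$; if $p(\Gamma)\neq 0$, $\beta(\Gamma,b)=\lfloor t(\Gamma,b)/p(\Gamma)\rfloor$, $r(\Gamma,b)=t(\Gamma,b)-\beta(\Gamma,b)p(\Gamma)$, and the $\Gamma$-inequality is $\sum_{j\in[n]}[p^-(\Gamma,j)+r(\Gamma,b)]x_j\ge r(\Gamma,b)(\beta(\Gamma,b)+1)+\sum_{i\in[m]:\bar a_i\in E(\Gamma)}b_i$. *)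

theory Defs
  imports Complex_Main
begin

text \<open>Nodes and columns are labelled by [n] = {1..n}; labels are reduced modulo n
  with 0 identified with n.\<close>

definition wrap :: "nat \<Rightarrow> int \<Rightarrow> int" where
  "wrap n a = (a - 1) mod int n + 1"

definition cint :: "nat \<Rightarrow> int \<Rightarrow> nat \<Rightarrow> int set" where
  "cint n a kk = {wrap n (a + int t) | t. t < kk}"

definition circular_with :: "nat \<Rightarrow> nat \<Rightarrow> (nat \<Rightarrow> nat \<Rightarrow> real) \<Rightarrow> (nat \<Rightarrow> nat) \<Rightarrow> (nat \<Rightarrow> nat) \<Rightarrow> bool" where
  "circular_with m n A l k \<longleftrightarrow>
     (\<forall>i\<in>{1..m}. l i \<in> {1..n} \<and> 2 \<le> k i \<and> k i \<le> n - 1 \<and>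
        (\<forall>j\<in>{1..n}. A i j = (if int j \<in> cint n (int (l i)) (k i) then 1 else 0)))"

text \<open>Points of R^n, represented as functions nat => real vanishing outside [n].\<close>
definition Rn :: "nat \<Rightarrow> (nat \<Rightarrow> real) set" where
  "Rn n = {x. \<forall>j. j \<notin> {1..n} \<longrightarrow> x j = 0}"

definition Q :: "nat \<Rightarrow> nat \<Rightarrow> (nat \<Rightarrow> nat \<Rightarrow> real) \<Rightarrow> (nat \<Rightarrow> int) \<Rightarrow> (nat \<Rightarrow> real) set" where
  "Q m n A b = {x \<in> Rn n. (\<forall>i\<in>{1..m}. (\<Sum>j=1..n. A i j * x j) \<ge> of_int (b i))
                          \<and> (\<forall>j\<in>{1..n}. x j \<ge> 0)}"

definition integral_points :: "nat \<Rightarrow> (nat \<Rightarrow> real) set" where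
  "integral_points n = {x \<in> Rn n. \<forall>j\<in>{1..n}. x j \<in> \<int>}"

definition conv :: "(nat \<Rightarrow> real) set \<Rightarrow> (nat \<Rightarrow> real) set" where
  "conv S = {x. \<exists>F c. finite F \<and> F \<noteq> {} \<and> F \<subseteq> S \<and> (\<forall>y\<in>F. c y \<ge> (0::real)) \<and> sum c F = 1
                     \<and> x = (\<lambda>j. \<Sum>y\<in>F. c y * y j)}"

definition Qstar :: "nat \<Rightarrow> nat \<Rightarrow> (nat \<Rightarrow> nat \<Rightarrow> real) \<Rightarrow> (nat \<Rightarrow> int) \<Rightarrow> (nat \<Rightarrow> real) set" where
  "Qstar m n A b = conv (Q m n A b \<inter> integral_points n)"

text \<open>Arcs of D(A): Row i = a_i, Short j = a_{m+j}, RevRow i = bar a_i, RevShort j = bar a_{m+j}.\<close>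
datatype arc = Row nat | Short nat | RevRow nat | RevShort nat

definition arcs :: "nat \<Rightarrow> nat \<Rightarrow> arc set" where
  "arcs m n = Row ` {1..m} \<union> Short ` {1..n} \<union> RevRow ` {1..m} \<union> RevShort ` {1..n}"

fun tail :: "nat \<Rightarrow> (nat \<Rightarrow> nat) \<Rightarrow> (nat \<Rightarrow> nat) \<Rightarrow> arc \<Rightarrow> int" where
  "tail n l k (Row i) = wrap n (int (l i) - 1)"
| "tail n l k (Short j) = wrap n (int j - 1)"
| "tail n l k (RevRow i) = wrap n (int (l i) + int (k i) - 1)"
| "tail n l k (RevShort j) = wrap n (int j)"

fun head :: "nat \<Rightarrow> (nat \<Rightarrow> nat) \<Rightarrow> (nat \<Rightarrow> nat) \<Rightarrow> arc \<Rightarrow> int" where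
  "head n l k (Row i) = wrap n (int (l i) + int (k i) - 1)"
| "head n l k (Short j) = wrap n (int j)"
| "head n l k (RevRow i) = wrap n (int (l i) - 1)"
| "head n l k (RevShort j) = wrap n (int j - 1)"

fun arc_len :: "(nat \<Rightarrow> nat) \<Rightarrow> arc \<Rightarrow> int" where
  "arc_len k (Row i) = int (k i)"
| "arc_len k (Short j) = 1"
| "arc_len k (RevRow i) = - int (k i)"
| "arc_len k (RevShort j) = -1"

fun is_reverse :: "arc \<Rightarrow> bool" where
  "is_reverse (RevRow i) = True"
| "is_reverse (RevShort j) = True"
| "is_reverse _ = False"

fun jumps :: "nat \<Rightarrow> (nat \<Rightarrow> nat) \<Rightarrow> (nat \<Rightarrow> nat) \<Rightarrow> arc \<Rightarrow> nat \<Rightarrow> bool" where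
  "jumps n l k (Row i) j = (int j \<in> cint n (int (l i)) (k i))"
| "jumps n l k (Short j') j = (j = j')"
| "jumps n l k (RevRow i) j = (int j \<in> cint n (int (l i)) (k i))"
| "jumps n l k (RevShort j') j = (j = j')"

text \<open>A (simple directed) circuit of D(A), given as the cyclic list of its arcs
  e_0, ..., e_(r-1): consecutive arcs are joined, it closes up, and no node is
  visited twice.\<close>
definition is_circuit :: "nat \<Rightarrow> nat \<Rightarrow> (nat \<Rightarrow> nat) \<Rightarrow> (nat \<Rightarrow> nat) \<Rightarrow> arc list \<Rightarrow> bool" where
  "is_circuit m n l k \<Gamma> \<longleftrightarrow>
     \<Gamma> \<noteq> [] \<and> set \<Gamma> \<subseteq> arcs m n \<and> distinct \<Gamma> \<and>
     (\<forall>s < length \<Gamma>. head n l k (\<Gamma> ! s) = tail n l k (\<Gamma> ! ((s + 1) mod length \<Gamma>))) \<and>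
     distinct (map (tail n l k) \<Gamma>)"

definition winding :: "nat \<Rightarrow> (nat \<Rightarrow> nat) \<Rightarrow> arc list \<Rightarrow> int" where
  "winding n k \<Gamma> = (\<Sum>a\<leftarrow>\<Gamma>. arc_len k a) div int n"

definition pminus :: "nat \<Rightarrow> (nat \<Rightarrow> nat) \<Rightarrow> (nat \<Rightarrow> nat) \<Rightarrow> arc list \<Rightarrow> nat \<Rightarrow> nat" where
  "pminus n l k \<Gamma> j = length (filter (\<lambda>a. is_reverse a \<and> jumps n l k a j) \<Gamma>)"

fun fwd_b :: "(nat \<Rightarrow> int) \<Rightarrow> arc \<Rightarrow> int" where
  "fwd_b b (Row i) = b i"
| "fwd_b b _ = 0"

fun rev_b :: "(nat \<Rightarrow> int) \<Rightarrow> arc \<Rightarrow> int" where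
  "rev_b b (RevRow i) = b i"
| "rev_b b _ = 0"

definition tval :: "(nat \<Rightarrow> int) \<Rightarrow> arc list \<Rightarrow> int" where
  "tval b \<Gamma> = (\<Sum>a\<leftarrow>\<Gamma>. fwd_b b a) - (\<Sum>a\<leftarrow>\<Gamma>. rev_b b a)"

definition beta :: "nat \<Rightarrow> (nat \<Rightarrow> nat) \<Rightarrow> (nat \<Rightarrow> int) \<Rightarrow> arc list \<Rightarrow> int" where
  "beta n k b \<Gamma> = \<lfloor>of_int (tval b \<Gamma>) / (of_int (winding n k \<Gamma>) :: real)\<rfloor>"

definition rval :: "nat \<Rightarrow> (nat \<Rightarrow> nat) \<Rightarrow> (nat \<Rightarrow> int) \<Rightarrow> arc list \<Rightarrow> int" where
  "rval n k b \<Gamma> = tval b \<Gamma> - beta n k b \<Gamma> * winding n k \<Gamma>"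

definition gamma_ineq :: "nat \<Rightarrow> (nat \<Rightarrow> nat) \<Rightarrow> (nat \<Rightarrow> nat) \<Rightarrow> (nat \<Rightarrow> int) \<Rightarrow> arc list \<Rightarrow> (nat \<Rightarrow> real) \<Rightarrow> bool" where
  "gamma_ineq n l k b \<Gamma> x \<longleftrightarrow>
     (\<Sum>j=1..n. (of_nat (pminus n l k \<Gamma> j) + of_int (rval n k b \<Gamma>)) * x j)
       \<ge> of_int (rval n k b \<Gamma> * (beta n k b \<Gamma> + 1) + (\<Sum>a\<leftarrow>\<Gamma>. rev_b b a))"

end

theory Submission
  imports Defs "HOL-Analysis.Convex" "HOL-Library.Function_Algebras"
begin

text \<open>
  A point x of Q whose coordinate sum is an integer \<sigma> is encoded by a potential Y on \<int> with
  Y j - Y (j - 1) = x (j mod n): the constraints of Q become integral difference constraints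
  along the arcs of D(A), and the wrap-around becomes Y (z + n) = Y z + \<sigma>.  Such systems are
  totally unimodular, so rounding the fractional parts of Y one value at a time writes x as a
  convex combination of integral points of Q.

  Going once around a circuit \<Gamma>, the forward and reverse jump sums of any x differ by p(\<Gamma>)
  times its coordinate sum; at integral points this forces the \<Gamma>-inequality.  Conversely, if
  the coordinate sum s of x is fractional, the \<Gamma>-inequalities say precisely that a suitable
  arc weighting of D(A) has no negative circuit.  A shortest-path potential for this weighting
  splits x = (1 - frac s) x1 + frac s x2 with x1, x2 in Q of coordinate sums \<lfloor>s\<rfloor> and
  \<lfloor>s\<rfloor> + 1, which are covered by the first case.
\<close>

section \<open>Convex hulls of real-valued functions\<close>

text \<open>The pointwise vector space structure makes the library's convex hull available both for
  points of R^n and for potentials on \<int>.\<close>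
instantiation "fun" :: (type, real_vector) real_vector
begin

definition scaleR_fun :: "real \<Rightarrow> ('a \<Rightarrow> 'b) \<Rightarrow> 'a \<Rightarrow> 'b" where
  "scaleR_fun r f = (\<lambda>x. r *\<^sub>R f x)"

instance
  by intro_classes (simp_all add: scaleR_fun_def fun_eq_iff scaleR_add_right scaleR_add_left)

end

lemma scaleR_fun_apply [simp]: "(r *\<^sub>R f) x = r *\<^sub>R f x"
  by (simp add: scaleR_fun_def)

lemma sum_fun_apply: "(\<Sum>i\<in>I. f i) x = (\<Sum>i\<in>I. f i x)"
  by (induction I rule: infinite_finite_induct) auto

lemma conv_eq_convex_hull: "conv S = convex hull S"
proof -
  have eq: "(\<lambda>j. \<Sum>y\<in>F. c y * y j) = (\<Sum>y\<in>F. c y *\<^sub>R y)" for F and c :: "_ \<Rightarrow> real"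
    by (simp add: fun_eq_iff sum_fun_apply)
  have ne: "F \<noteq> {}" if "sum c F = (1::real)" for F c
    using that by auto
  show ?thesis
    unfolding conv_def convex_hull_explicit eq
    by (intro Collect_cong iffI; elim exE conjE; intro exI conjI) (auto intro: ne)
qed

lemma linear_coordinate: "linear (\<lambda>y :: 'a \<Rightarrow> real. y j)"
  by (rule linearI) simp_all

lemma linear_weighted_sum: "linear (\<lambda>y :: 'a \<Rightarrow> real. \<Sum>j\<in>J. w j * y j)"
  by (rule linearI) (simp_all add: sum.distrib algebra_simps sum_distrib_left)

lemma convex_halfspace_weighted_sum: "convex {x :: 'a \<Rightarrow> real. R \<le> (\<Sum>j\<in>J. w j * x j)}"
proof -
  have "convex ((\<lambda>x :: 'a \<Rightarrow> real. \<Sum>j\<in>J. w j * x j) -` {R..})"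
    by (rule convex_linear_vimage[OF linear_weighted_sum convex_real_interval(1)])
  then show ?thesis
    by (simp add: vimage_def)
qed

lemma convex_coordinate_eq: "convex {x :: 'a \<Rightarrow> real. x j = r}"
proof -
  have "convex ((\<lambda>x :: 'a \<Rightarrow> real. x j) -` {r})"
    by (rule convex_linear_vimage[OF linear_coordinate convex_singleton])
  then show ?thesis
    by (simp add: vimage_def)
qed

section \<open>Rounding solutions of integral difference constraints\<close>

definition diff_feasible :: "('v \<times> 'v \<times> int) set \<Rightarrow> ('v \<Rightarrow> real) \<Rightarrow> bool" where
  "diff_feasible C Y \<longleftrightarrow> (\<forall>(u, v, c)\<in>C. of_int c \<le> Y v - Y u)"

lemma diff_feasibleD: "diff_feasible C Y \<Longrightarrow> (u, v, c) \<in> C \<Longrightarrow> of_int c \<le> Y v - Y u"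
  unfolding diff_feasible_def by blast

definition fracs :: "('v \<Rightarrow> real) \<Rightarrow> real set" where
  "fracs Y = range (\<lambda>z. frac (Y z)) - {0}"

lemma int_le_diff_round_up:
  fixes x y :: real
  assumes "of_int c \<le> y - x" "frac y < frac x"
  shows "of_int c \<le> y - (x + (1 - frac x))"
proof -
  have "real_of_int c < of_int (\<lfloor>y\<rfloor> - \<lfloor>x\<rfloor>)"
    using assms unfolding frac_def by simp
  then have "c \<le> \<lfloor>y\<rfloor> - \<lfloor>x\<rfloor> - 1"
    by (simp only: of_int_less_iff)
  then have "real_of_int c \<le> of_int \<lfloor>y\<rfloor> - of_int \<lfloor>x\<rfloor> - 1"
    by (metis of_int_1 of_int_diff of_int_le_iff)
  then show ?thesis
    using of_int_floor_le[of y] unfolding frac_def by linarith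
qed

lemma int_le_diff_round_down:
  fixes x y :: real
  assumes "of_int c \<le> y - x" "frac x \<le> d"
  shows "of_int c \<le> (y - (frac y - d)) - x"
proof -
  have "real_of_int c < of_int \<lfloor>y\<rfloor> - of_int \<lfloor>x\<rfloor> + 1"
    using assms(1) of_int_floor_le[of x] real_of_int_floor_add_one_gt[of y] by linarith
  then have "c \<le> \<lfloor>y\<rfloor> - \<lfloor>x\<rfloor>"
    by (metis of_int_1 of_int_add of_int_diff of_int_less_iff zle_add1_eq_le)
  then have "real_of_int c \<le> of_int \<lfloor>y\<rfloor> - of_int \<lfloor>x\<rfloor>"
    by (metis of_int_diff of_int_le_iff)
  then show ?thesis
    using assms(2) unfolding frac_def by linarith
qed

definition raise_frac :: "('v \<Rightarrow> real) \<Rightarrow> real \<Rightarrow> 'v \<Rightarrow> real" where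
  "raise_frac Y \<phi> z = (if frac (Y z) = \<phi> then Y z + (1 - \<phi>) else Y z)"

definition lower_frac :: "('v \<Rightarrow> real) \<Rightarrow> real \<Rightarrow> real \<Rightarrow> 'v \<Rightarrow> real" where
  "lower_frac Y \<phi> \<psi> z = (if frac (Y z) = \<phi> then Y z - (\<phi> - \<psi>) else Y z)"

lemma diff_feasible_raise_frac:
  assumes "diff_feasible C Y" "\<forall>z. frac (Y z) \<le> \<phi>"
  shows "diff_feasible C (raise_frac Y \<phi>)"
  unfolding diff_feasible_def
proof (clarify)
  fix u v c assume "(u, v, c) \<in> C"
  then have uv: "of_int c \<le> Y v - Y u"
    by (rule diff_feasibleD[OF assms(1)])
  have "frac (Y v) < 1"
    by (rule frac_lt_1)
  then show "of_int c \<le> raise_frac Y \<phi> v - raise_frac Y \<phi> u"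
    using int_le_diff_round_up[OF uv] uv assms(2)[rule_format, of v]
    unfolding raise_frac_def by (auto simp: less_le)
qed

lemma diff_feasible_lower_frac:
  assumes "diff_feasible C Y" "\<forall>z. frac (Y z) \<noteq> \<phi> \<longrightarrow> frac (Y z) \<le> \<psi>" "\<psi> \<le> \<phi>"
  shows "diff_feasible C (lower_frac Y \<phi> \<psi>)"
  unfolding diff_feasible_def
proof (clarify)
  fix u v c assume "(u, v, c) \<in> C"
  then have uv: "of_int c \<le> Y v - Y u"
    by (rule diff_feasibleD[OF assms(1)])
  show "of_int c \<le> lower_frac Y \<phi> \<psi> v - lower_frac Y \<phi> \<psi> u"
  proof (cases "frac (Y v) = \<phi> \<and> frac (Y u) \<noteq> \<phi>")
    case True
    then show ?thesis
      using int_le_diff_round_down[OF uv, of \<psi>] assms(2) unfolding lower_frac_def by auto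
  qed (use uv assms(3) in \<open>auto simp: lower_frac_def\<close>)
qed

lemma fracs_raise_frac:
  fixes Y :: "'v \<Rightarrow> real"
  shows "fracs (raise_frac Y \<phi>) \<subseteq> fracs Y - {\<phi>}"
proof -
  have "Y z + (1 - \<phi>) \<in> \<int>" if "frac (Y z) = \<phi>" for z :: 'v
  proof -
    have "Y z + (1 - \<phi>) = of_int (\<lfloor>Y z\<rfloor> + 1)"
      using that unfolding frac_def by simp
    then show ?thesis
      by (metis Ints_of_int)
  qed
  then have "frac (raise_frac Y \<phi> z) = (if frac (Y z) = \<phi> then 0 else frac (Y z))" for z :: 'v
    unfolding raise_frac_def by (simp add: frac_eq_0_iff)
  then show ?thesis
    unfolding fracs_def by auto
qed

lemma fracs_lower_frac:
  fixes Y :: "'v \<Rightarrow> real"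
  assumes "\<psi> \<in> insert 0 (fracs Y - {\<phi>})"
  shows "fracs (lower_frac Y \<phi> \<psi>) \<subseteq> fracs Y - {\<phi>}"
proof -
  have "0 \<le> \<psi>" "\<psi> < 1"
    using assms frac_ge_0 frac_lt_1 unfolding fracs_def by auto
  then have "frac (Y z - (\<phi> - \<psi>)) = \<psi>" if "frac (Y z) = \<phi>" for z :: 'v
  proof -
    have eq: "Y z - (\<phi> - \<psi>) = \<psi> + of_int \<lfloor>Y z\<rfloor>"
      using that unfolding frac_def by simp
    show ?thesis
      unfolding eq frac_add_of_int_right using \<open>0 \<le> \<psi>\<close> \<open>\<psi> < 1\<close> by (simp add: frac_eq)
  qed
  then have "frac (lower_frac Y \<phi> \<psi> z) = (if frac (Y z) = \<phi> then \<psi> else frac (Y z))" for z :: 'v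
    unfolding lower_frac_def by simp
  then show ?thesis
    using assms unfolding fracs_def by auto
qed

lemma raise_lower_frac_combination:
  assumes "\<psi> < 1"
  shows "Y = ((\<phi> - \<psi>) / (1 - \<psi>)) *\<^sub>R raise_frac Y \<phi> + (1 - (\<phi> - \<psi>) / (1 - \<psi>)) *\<^sub>R lower_frac Y \<phi> \<psi>"
proof -
  define t where "t = (\<phi> - \<psi>) / (1 - \<psi>)"
  have "t * (1 - \<phi>) = (1 - t) * (\<phi> - \<psi>)"
    unfolding t_def using assms by (simp add: field_simps)
  then show ?thesis
    unfolding t_def[symmetric] by (simp add: fun_eq_iff raise_frac_def lower_frac_def algebra_simps)
qed

lemma diff_feasible_split_top_fraction:
  fixes Y :: "'v \<Rightarrow> real"
  assumes feas: "diff_feasible C Y" and fin: "finite (fracs Y)" and ne: "fracs Y \<noteq> {}"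
  obtains Yp Ym t where "diff_feasible C Yp" "diff_feasible C Ym" "0 \<le> t" "t \<le> 1"
    "Y = t *\<^sub>R Yp + (1 - t) *\<^sub>R Ym"
    "fracs Yp \<subset> fracs Y" "fracs Ym \<subset> fracs Y"
proof -
  define \<phi> where "\<phi> = Max (fracs Y)"
  define \<psi> where "\<psi> = Max (insert 0 (fracs Y - {\<phi>}))"
  have \<phi>_in: "\<phi> \<in> fracs Y"
    unfolding \<phi>_def using fin ne by simp
  have \<psi>_in: "\<psi> \<in> insert 0 (fracs Y - {\<phi>})"
    unfolding \<psi>_def by (rule Max_in) (use fin in auto)
  have \<phi>_max: "u \<le> \<phi>" if "u \<in> fracs Y" for u
    unfolding \<phi>_def using fin that by simp
  have \<psi>_max: "u \<le> \<psi>" if "u \<in> fracs Y - {\<phi>}" for u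
    unfolding \<psi>_def by (rule Max_ge) (use fin that in auto)
  have bounds: "0 < \<phi>" "\<phi> < 1" "0 \<le> \<psi>" "\<psi> < \<phi>"
    using \<phi>_in \<psi>_in \<phi>_max[of \<psi>] frac_ge_0 frac_lt_1 unfolding fracs_def by (auto simp: less_le)
  have above: "frac (Y z) \<le> \<phi> \<and> (frac (Y z) \<noteq> \<phi> \<longrightarrow> frac (Y z) \<le> \<psi>)" for z
  proof (cases "frac (Y z) = 0")
    case False
    then have "frac (Y z) \<in> fracs Y"
      unfolding fracs_def by simp
    then show ?thesis
      using \<phi>_max \<psi>_max by blast
  qed (use bounds in \<open>simp del: frac_eq_0_iff\<close>)
  show ?thesis
  proof
    show "diff_feasible C (raise_frac Y \<phi>)"
      using diff_feasible_raise_frac[OF feas] above by blast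
    show "diff_feasible C (lower_frac Y \<phi> \<psi>)"
      using diff_feasible_lower_frac[OF feas] above bounds(4) by fastforce
    show "0 \<le> (\<phi> - \<psi>) / (1 - \<psi>)" "(\<phi> - \<psi>) / (1 - \<psi>) \<le> 1"
      using bounds by auto
    show "Y = ((\<phi> - \<psi>) / (1 - \<psi>)) *\<^sub>R raise_frac Y \<phi> + (1 - (\<phi> - \<psi>) / (1 - \<psi>)) *\<^sub>R lower_frac Y \<phi> \<psi>"
      using bounds by (intro raise_lower_frac_combination) simp
    show "fracs (raise_frac Y \<phi>) \<subset> fracs Y" "fracs (lower_frac Y \<phi> \<psi>) \<subset> fracs Y"
      using fracs_raise_frac fracs_lower_frac[OF \<psi>_in] \<phi>_in by blast+
  qed
qed

lemma diff_feasible_in_convex_hull_integral: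
  fixes Y :: "'v \<Rightarrow> real"
  assumes "diff_feasible C Y" "finite (fracs Y)"
  shows "Y \<in> convex hull {Z. diff_feasible C Z \<and> (\<forall>z. Z z \<in> \<int>)}"
  using assms
proof (induction "card (fracs Y)" arbitrary: Y rule: less_induct)
  case less
  show ?case
  proof (cases "fracs Y = {}")
    case True
    then have "\<forall>z. Y z \<in> \<int>"
      unfolding fracs_def by (auto simp flip: frac_eq_0_iff)
    then show ?thesis
      using less.prems by (intro hull_inc) auto
  next
    case False
    obtain Yp Ym t where split: "diff_feasible C Yp" "diff_feasible C Ym" "0 \<le> t" "t \<le> 1"
      "Y = t *\<^sub>R Yp + (1 - t) *\<^sub>R Ym" "fracs Yp \<subset> fracs Y" "fracs Ym \<subset> fracs Y"
      using diff_feasible_split_top_fraction[OF less.prems False] .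
    have "finite (fracs Yp)" "finite (fracs Ym)"
      using split(6,7) less.prems(2) by (auto intro: finite_subset)
    moreover have "card (fracs Yp) < card (fracs Y)" "card (fracs Ym) < card (fracs Y)"
      using split(6,7) less.prems(2) by (auto intro: psubset_card_mono)
    ultimately have "Yp \<in> convex hull {Z. diff_feasible C Z \<and> (\<forall>z. Z z \<in> \<int>)}"
      "Ym \<in> convex hull {Z. diff_feasible C Z \<and> (\<forall>z. Z z \<in> \<int>)}"
      using less.hyps split(1,2) by blast+
    then show ?thesis
      unfolding split(5) using split(3,4) by (intro convexD[OF convex_convex_hull]) auto
  qed
qed

section \<open>Quasi-periodic potentials on the integers\<close>

lemma wrap_range: "n > 0 \<Longrightarrow> 1 \<le> wrap n z \<and> wrap n z \<le> int n"
  unfolding wrap_def by (simp add: pos_mod_bound pos_mod_sign add1_zle_eq)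

lemma wrap_id: "1 \<le> z \<Longrightarrow> z \<le> int n \<Longrightarrow> wrap n z = z"
  unfolding wrap_def by simp

lemma wrap_wrap [simp]: "n > 0 \<Longrightarrow> wrap n (wrap n z) = wrap n z"
  using wrap_range wrap_id by blast

lemma wrap_add_wrap: "wrap n (wrap n a + b) = wrap n (a + b)"
proof -
  have "((a - 1) mod int n + b) mod int n = ((a - 1) + b) mod int n"
    by (rule mod_add_left_eq)
  then show ?thesis
    unfolding wrap_def by (simp add: algebra_simps)
qed

lemma wrap_add_wrap_left: "wrap n (b + wrap n a) = wrap n (b + a)"
  using wrap_add_wrap[of n a b] by (simp add: add.commute)

lemma wrap_diff_wrap: "wrap n (wrap n a - b) = wrap n (a - b)"
  using wrap_add_wrap[of n a "- b"] by simp

lemma wrap_add_self: "wrap n (z + int n) = wrap n z"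
proof -
  have "(z + int n - 1) mod int n = ((z - 1) + int n) mod int n"
    by (simp add: algebra_simps)
  then show ?thesis
    unfolding wrap_def by simp
qed

lemma wrap_eq_iff_dvd: "wrap n a = wrap n b \<longleftrightarrow> int n dvd (a - b)"
  unfolding wrap_def by (simp add: mod_eq_dvd_iff)

lemma inj_on_wrap_shift:
  assumes "L \<le> n"
  shows "inj_on (\<lambda>t. wrap n (a + int t)) {..<L}"
proof
  fix t1 t2 assume t: "t1 \<in> {..<L}" "t2 \<in> {..<L}" "wrap n (a + int t1) = wrap n (a + int t2)"
  then have dvd: "int n dvd (int t1 - int t2)"
    by (simp add: wrap_eq_iff_dvd)
  show "t1 = t2"
  proof (rule ccontr)
    assume "t1 \<noteq> t2"
    then have "\<bar>int n\<bar> \<le> \<bar>int t1 - int t2\<bar>"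
      using dvd by (intro dvd_imp_le_int) auto
    then show False
      using t assms by auto
  qed
qed

lemma sum_cint:
  assumes n: "n > 0" and L: "L \<le> n"
  shows "(\<Sum>j\<in>{j\<in>{1..n}. int j \<in> cint n a L}. g j) = (\<Sum>t<L. g (nat (wrap n (a + int t))))"
proof -
  define h where "h t = nat (wrap n (a + int t))" for t
  have inj: "inj_on h {..<L}"
    using inj_on_wrap_shift[OF L, of a] wrap_range[OF n]
    unfolding h_def inj_on_def by (metis eq_nat_nat_iff order_trans zero_le_one)
  have "{j\<in>{1..n}. int j \<in> cint n a L} = h ` {..<L}"
  proof (intro set_eqI iffI)
    fix j assume "j \<in> {j\<in>{1..n}. int j \<in> cint n a L}"
    then obtain t where "t < L" "int j = wrap n (a + int t)"
      unfolding cint_def by auto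
    then show "j \<in> h ` {..<L}"
      unfolding h_def by (intro image_eqI[of _ _ t]) auto
  next
    fix j assume "j \<in> h ` {..<L}"
    then obtain t where t: "t < L" "j = h t"
      by auto
    then have "int j = wrap n (a + int t)"
      using wrap_range[OF n, of "a + int t"] unfolding h_def by simp
    then show "j \<in> {j\<in>{1..n}. int j \<in> cint n a L}"
      using t(1) wrap_range[OF n, of "a + int t"] unfolding cint_def by auto
  qed
  then show ?thesis
    using sum.reindex[OF inj, of g] unfolding h_def by simp
qed

definition quasi_periodic :: "nat \<Rightarrow> real \<Rightarrow> (int \<Rightarrow> real) \<Rightarrow> bool" where
  "quasi_periodic n s Y \<longleftrightarrow> (\<forall>z. Y (z + int n) = Y z + s)"

lemma quasi_periodic_shift:
  assumes "quasi_periodic n s Y"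
  shows "Y (z + q * int n) = Y z + of_int q * s"
proof -
  have nat_shift: "Y (z + int p * int n) = Y z + of_nat p * s" for z p
  proof (induction p)
    case (Suc p)
    have "Y (z + int (Suc p) * int n) = Y ((z + int p * int n) + int n)"
      by (simp add: algebra_simps)
    also have "\<dots> = Y z + of_nat p * s + s"
      using assms Suc unfolding quasi_periodic_def by simp
    finally show ?case
      by (simp add: algebra_simps)
  qed simp
  show ?thesis
  proof (cases "q \<ge> 0")
    case True
    then show ?thesis
      using nat_shift[of z "nat q"] by simp
  next
    case False
    then show ?thesis
      using nat_shift[of "z + q * int n" "nat (- q)"] by simp
  qed
qed

lemma finite_fracs_quasi_periodic:
  assumes "n > 0" "quasi_periodic n (of_int \<sigma>) Y"
  shows "finite (fracs Y)"
proof -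
  have shift: "frac (Y z) = frac (Y (z mod int n))" for z
  proof -
    have "Y z = Y (z mod int n) + of_int (z div int n * \<sigma>)"
      using quasi_periodic_shift[OF assms(2), of "z mod int n" "z div int n"] by simp
    then show ?thesis
      by (metis frac_add_of_int_right)
  qed
  have "fracs Y \<subseteq> (\<lambda>z. frac (Y z)) ` {0..<int n}"
  proof
    fix u assume "u \<in> fracs Y"
    then obtain z where "u = frac (Y z)"
      unfolding fracs_def by auto
    then show "u \<in> (\<lambda>z. frac (Y z)) ` {0..<int n}"
      using shift[of z] assms(1) by (intro image_eqI[of _ _ "z mod int n"]) auto
  qed
  then show ?thesis
    by (rule finite_subset) simp
qed

lemma quasi_periodic_diff_wrap:
  assumes n: "n > 0" and Z: "quasi_periodic n s Z"
  shows "Z z - Z (z - 1) = Z (wrap n z) - Z (wrap n z - 1)"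
proof -
  have "int n dvd (z - wrap n z)"
    using n by (simp flip: wrap_eq_iff_dvd)
  then obtain q where q: "z = wrap n z + q * int n"
    by (auto elim!: dvdE simp: algebra_simps)
  have "Z z = Z (wrap n z) + of_int q * s"
    using quasi_periodic_shift[OF Z, of "wrap n z" q] q by simp
  moreover have "Z (z - 1) = Z (wrap n z - 1) + of_int q * s"
    using quasi_periodic_shift[OF Z, of "wrap n z - 1" q] q by (simp add: algebra_simps)
  ultimately show ?thesis
    by simp
qed

definition increments :: "nat \<Rightarrow> (int \<Rightarrow> real) \<Rightarrow> nat \<Rightarrow> real" where
  "increments n Z j = (if j \<in> {1..n} then Z (int j) - Z (int j - 1) else 0)"

lemma linear_increments: "linear (increments n)"
  by (rule linearI) (auto simp: increments_def fun_eq_iff algebra_simps)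

lemma increments_wrap:
  assumes "n > 0" "quasi_periodic n s Z"
  shows "Z z - Z (z - 1) = increments n Z (nat (wrap n z))"
  using quasi_periodic_diff_wrap[OF assms, of z] wrap_range[OF assms(1), of z]
  unfolding increments_def by auto

lemma sum_increments:
  assumes "quasi_periodic n s Z"
  shows "(\<Sum>j=1..n. increments n Z j) = s"
proof -
  have "(\<Sum>j=1..N. Z (int j) - Z (int j - 1)) = Z (int N) - Z 0" for N
    by (induction N) (auto simp: sum.cl_ivl_Suc)
  then have "(\<Sum>j=1..n. increments n Z j) = Z (int n) - Z 0"
    unfolding increments_def by simp
  then show ?thesis
    using assms[unfolded quasi_periodic_def, rule_format, of 0] by simp
qed

definition prefix_potential :: "nat \<Rightarrow> (nat \<Rightarrow> real) \<Rightarrow> int \<Rightarrow> real" where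
  "prefix_potential n x z = of_int (z div int n) * (\<Sum>j=1..n. x j) + (\<Sum>j=1..nat (z mod int n). x j)"

lemma quasi_periodic_prefix_potential:
  "n > 0 \<Longrightarrow> quasi_periodic n (\<Sum>j=1..n. x j) (prefix_potential n x)"
  unfolding quasi_periodic_def prefix_potential_def by (simp add: distrib_right)

lemma prefix_potential_diff:
  assumes "j \<in> {1..n}"
  shows "prefix_potential n x (int j) - prefix_potential n x (int j - 1) = x j"
proof (cases "j = n")
  case True
  then have "(\<Sum>j=1..n. x j) = (\<Sum>j=1..n - 1. x j) + x n"
    using assms by (cases n) (auto simp: sum.cl_ivl_Suc)
  then show ?thesis
    using True assms by (simp add: prefix_potential_def nat_diff_distrib zmod_minus1)
next
  case False
  then have "(\<Sum>i=1..j. x i) = (\<Sum>i=1..j - 1. x i) + x j"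
    using assms by (cases j) (auto simp: sum.cl_ivl_Suc)
  then show ?thesis
    using False assms by (simp add: prefix_potential_def nat_diff_distrib)
qed

lemma increments_prefix_potential:
  assumes "x \<in> Rn n"
  shows "increments n (prefix_potential n x) = x"
  using assms prefix_potential_diff unfolding increments_def Rn_def by (auto simp: fun_eq_iff)

lemma prefix_potential_step:
  assumes "n > 0" "x \<in> Rn n"
  shows "prefix_potential n x z - prefix_potential n x (z - 1) = x (nat (wrap n z))"
  using increments_wrap[OF assms(1) quasi_periodic_prefix_potential[OF assms(1)]]
  by (simp add: increments_prefix_potential[OF assms(2)])

definition periodic_extension :: "nat \<Rightarrow> real \<Rightarrow> (int \<Rightarrow> real) \<Rightarrow> int \<Rightarrow> real" where
  "periodic_extension n c \<pi> z = \<pi> (wrap n z) + c * of_int ((z - wrap n z) div int n)"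

lemma quasi_periodic_periodic_extension:
  assumes "n > 0"
  shows "quasi_periodic n c (periodic_extension n c \<pi>)"
  unfolding quasi_periodic_def
proof
  fix z
  have "(z + int n - wrap n z) div int n = ((z - wrap n z) + int n) div int n"
    by (simp add: algebra_simps)
  also have "\<dots> = (z - wrap n z) div int n + 1"
    using assms by simp
  finally show "periodic_extension n c \<pi> (z + int n) = periodic_extension n c \<pi> z + c"
    unfolding periodic_extension_def wrap_add_self by (simp add: algebra_simps)
qed

lemma sum_wrap_telescope:
  assumes "\<forall>z. G z - G (z - 1) = (g (nat (wrap n z)) :: real)"
  shows "(\<Sum>t<L. g (nat (wrap n (a + 1 + int t)))) = G (a + int L) - G a"
proof (induction L)
  case (Suc L)
  have "G (a + int (Suc L)) - G (a + int (Suc L) - 1) = g (nat (wrap n (a + int (Suc L))))"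
    using assms by blast
  then show ?case
    using Suc by (simp add: algebra_simps)
qed simp

lemma telescope_wrap_invariant:
  assumes "\<forall>z. G z - G (z - 1) = (g (nat (wrap n z)) :: real)" "wrap n a = wrap n a'"
  shows "G (a + int L) - G a = G (a' + int L) - G a'"
proof -
  have "wrap n (a + 1 + int t) = wrap n (a' + 1 + int t)" for t
    using wrap_add_wrap[of n a "1 + int t"] wrap_add_wrap[of n a' "1 + int t"] assms(2)
    by (simp add: add.assoc)
  then show ?thesis
    using sum_wrap_telescope[OF assms(1), where L = L and a = a]
      sum_wrap_telescope[OF assms(1), where L = L and a = a'] by simp
qed

section \<open>Arcs and circuits of D(A)\<close>

lemma finite_arcs: "finite (arcs m n)"
  unfolding arcs_def by simp

definition jump_sum :: "nat \<Rightarrow> (nat \<Rightarrow> nat) \<Rightarrow> (nat \<Rightarrow> nat) \<Rightarrow> (nat \<Rightarrow> real) \<Rightarrow> arc \<Rightarrow> real" where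
  "jump_sum n l k g a = (\<Sum>j\<in>{j\<in>{1..n}. jumps n l k a j}. g j)"

definition arc_sign :: "arc \<Rightarrow> real" where
  "arc_sign a = (if is_reverse a then -1 else 1)"

lemma jump_sum_Short:
  assumes "j \<in> {1..n}"
  shows "jump_sum n l k g (Short j) = g j"
proof -
  have "{j'\<in>{1..n}. jumps n l k (Short j) j'} = {j}"
    using assms by auto
  then show ?thesis
    unfolding jump_sum_def by simp
qed

lemma jump_sum_RevShort:
  assumes "j \<in> {1..n}"
  shows "jump_sum n l k g (RevShort j) = g j"
proof -
  have "{j'\<in>{1..n}. jumps n l k (RevShort j) j'} = {j}"
    using assms by auto
  then show ?thesis
    unfolding jump_sum_def by simp
qed

lemma jump_sum_RevRow: "jump_sum n l k g (RevRow i) = jump_sum n l k g (Row i)"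
  by (simp add: jump_sum_def)

lemma jump_sum_Row:
  assumes n: "n > 0" and circ: "circular_with m n A l k" and i: "i \<in> {1..m}"
    and G: "\<forall>z. G z - G (z - 1) = (g (nat (wrap n z)) :: real)"
  shows "jump_sum n l k g (Row i) = G (int (l i) - 1 + int (k i)) - G (int (l i) - 1)"
proof -
  have "k i \<le> n"
    using circ i unfolding circular_with_def by fastforce
  then have "jump_sum n l k g (Row i) = (\<Sum>t<k i. g (nat (wrap n (int (l i) + int t))))"
    unfolding jump_sum_def jumps.simps using sum_cint[OF n] by simp
  also have "\<dots> = G (int (l i) - 1 + int (k i)) - G (int (l i) - 1)"
    using sum_wrap_telescope[OF G, where L = "k i" and a = "int (l i) - 1"] by simp
  finally show ?thesis .
qed

lemma arc_sign_jump_sum: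
  assumes n: "n > 0" and circ: "circular_with m n A l k" and a: "a \<in> arcs m n"
    and G: "\<forall>z. G z - G (z - 1) = (g (nat (wrap n z)) :: real)"
  shows "arc_sign a * jump_sum n l k g a = G (tail n l k a + arc_len k a) - G (tail n l k a)"
proof -
  have inv: "G (b + int L) - G b = G (b' + int L) - G b'" if "wrap n b = wrap n b'" for b b' L
    using telescope_wrap_invariant[OF G that] .
  consider (R) i where "a = Row i" "i \<in> {1..m}" | (S) j where "a = Short j" "j \<in> {1..n}"
    | (RR) i where "a = RevRow i" "i \<in> {1..m}" | (RS) j where "a = RevShort j" "j \<in> {1..n}"
    using a unfolding arcs_def by blast
  then show ?thesis
  proof cases
    case (R i)
    then show ?thesis
      using jump_sum_Row[OF n circ R(2) G] inv[of "int (l i) - 1" "wrap n (int (l i) - 1)" "k i"] n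
      by (simp add: arc_sign_def)
  next
    case (S j)
    have "G (wrap n (int j - 1) + 1) - G (wrap n (int j - 1)) = g (nat (wrap n (int j)))"
      using G[rule_format, of "wrap n (int j - 1) + 1"] wrap_add_wrap[of n "int j - 1" 1] by simp
    then show ?thesis
      using S by (simp add: arc_sign_def jump_sum_Short wrap_id)
  next
    case (RR i)
    define T where "T = wrap n (int (l i) + int (k i) - 1)"
    have "wrap n (T - int (k i)) = wrap n (int (l i) - 1)"
      unfolding T_def using wrap_add_wrap[of n "int (l i) + int (k i) - 1" "- int (k i)"] by simp
    then have "G (T - int (k i) + int (k i)) - G (T - int (k i))
        = G (int (l i) - 1 + int (k i)) - G (int (l i) - 1)"
      by (rule inv)
    then show ?thesis
      using RR jump_sum_Row[OF n circ RR(2) G] unfolding T_def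
      by (simp add: arc_sign_def jump_sum_RevRow)
  next
    case (RS j)
    then show ?thesis
      using G[rule_format, of "int j"] by (simp add: arc_sign_def jump_sum_RevShort wrap_id)
  qed
qed

lemma arc_head: "wrap n (tail n l k a + arc_len k a) = head n l k a"
  by (cases a) (simp_all add: wrap_add_wrap wrap_add_wrap_left wrap_diff_wrap algebra_simps)

definition arc_turns :: "nat \<Rightarrow> (nat \<Rightarrow> nat) \<Rightarrow> (nat \<Rightarrow> nat) \<Rightarrow> arc \<Rightarrow> int" where
  "arc_turns n l k a = (tail n l k a + arc_len k a - head n l k a) div int n"

lemma head_range: "n > 0 \<Longrightarrow> 1 \<le> head n l k a \<and> head n l k a \<le> int n"
  by (cases a) (auto simp: wrap_range)

lemma tail_range: "n > 0 \<Longrightarrow> 1 \<le> tail n l k a \<and> tail n l k a \<le> int n"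
  by (cases a) (auto simp: wrap_range)

lemma tail_add_arc_len:
  assumes "n > 0"
  shows "tail n l k a + arc_len k a = head n l k a + arc_turns n l k a * int n"
proof -
  have "wrap n (tail n l k a + arc_len k a) = wrap n (head n l k a)"
    using arc_head head_range[OF assms] wrap_id by metis
  then have "int n dvd (tail n l k a + arc_len k a - head n l k a)"
    by (simp add: wrap_eq_iff_dvd)
  then show ?thesis
    unfolding arc_turns_def by (auto elim!: dvdE)
qed

lemma periodic_extension_along_arc:
  assumes "n > 0"
  shows "periodic_extension n c \<pi> (tail n l k a + arc_len k a) - periodic_extension n c \<pi> (tail n l k a)
    = \<pi> (head n l k a) - \<pi> (tail n l k a) + c * of_int (arc_turns n l k a)"
  using tail_range[OF assms] wrap_id
  unfolding periodic_extension_def arc_head arc_turns_def by simp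

lemma sum_list_cyclic_shift:
  assumes "xs \<noteq> []" "\<forall>s<length xs. H (xs ! s) = T (xs ! ((s + 1) mod length xs))"
  shows "(\<Sum>a\<leftarrow>xs. F (H a)) = (\<Sum>a\<leftarrow>xs. (F (T a) :: 'b :: comm_monoid_add))"
proof -
  have "(\<Sum>a\<leftarrow>xs. F (H a)) = (\<Sum>s<length xs. F (T (xs ! ((s + 1) mod length xs))))"
    using assms(2) by (simp add: sum_list_sum_nth atLeast0LessThan)
  also have "\<dots> = (\<Sum>s<length xs. F (T (xs ! s)))"
  proof -
    obtain L where L: "length xs = Suc L"
      using assms(1) by (cases xs) auto
    have "(\<Sum>s<Suc L. F (T (xs ! ((s + 1) mod Suc L))))
        = (\<Sum>s<L. F (T (xs ! Suc s))) + F (T (xs ! 0))"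
      by simp
    also have "\<dots> = (\<Sum>s<Suc L. F (T (xs ! s)))"
      by (simp only: sum.lessThan_Suc_shift add.commute)
    finally show ?thesis
      using L by simp
  qed
  also have "\<dots> = (\<Sum>a\<leftarrow>xs. F (T a))"
    by (simp add: sum_list_sum_nth atLeast0LessThan)
  finally show ?thesis .
qed

lemma circuit_sum_head_tail:
  assumes "is_circuit m n l k \<Gamma>"
  shows "(\<Sum>a\<leftarrow>\<Gamma>. F (head n l k a)) = (\<Sum>a\<leftarrow>\<Gamma>. (F (tail n l k a) :: 'b :: comm_monoid_add))"
  using assms unfolding is_circuit_def by (intro sum_list_cyclic_shift) auto

lemma winding_eq_sum_arc_turns:
  assumes n: "n > 0" and C: "is_circuit m n l k \<Gamma>"
  shows "winding n k \<Gamma> = (\<Sum>a\<leftarrow>\<Gamma>. arc_turns n l k a)"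
proof -
  have "(\<Sum>a\<leftarrow>\<Gamma>. arc_len k a) = (\<Sum>a\<leftarrow>\<Gamma>. (head n l k a - tail n l k a) + arc_turns n l k a * int n)"
    using tail_add_arc_len[OF n] by (intro arg_cong[where f = sum_list] map_cong) (auto simp: algebra_simps)
  also have "\<dots> = int n * (\<Sum>a\<leftarrow>\<Gamma>. arc_turns n l k a)"
    using circuit_sum_head_tail[OF C, of id]
    by (simp add: sum_list_addf sum_list_subtractf sum_list_const_mult mult.commute)
  finally show ?thesis
    unfolding winding_def using n by simp
qed

lemma circuit_sum_quasi_periodic:
  assumes n: "n > 0" and C: "is_circuit m n l k \<Gamma>" and G: "quasi_periodic n S G"
  shows "(\<Sum>a\<leftarrow>\<Gamma>. G (tail n l k a + arc_len k a) - G (tail n l k a)) = of_int (winding n k \<Gamma>) * S"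
proof -
  have "(\<Sum>a\<leftarrow>\<Gamma>. G (tail n l k a + arc_len k a) - G (tail n l k a))
      = (\<Sum>a\<leftarrow>\<Gamma>. (G (head n l k a) - G (tail n l k a)) + of_int (arc_turns n l k a) * S)"
    using tail_add_arc_len[OF n] quasi_periodic_shift[OF G]
    by (intro arg_cong[where f = sum_list] map_cong) auto
  also have "\<dots> = of_int (\<Sum>a\<leftarrow>\<Gamma>. arc_turns n l k a) * S"
    using circuit_sum_head_tail[OF C, of G]
    by (simp add: sum_list_addf sum_list_subtractf sum_list_mult_const comp_def flip: sum_list_of_int)
  finally show ?thesis
    using winding_eq_sum_arc_turns[OF n C] by simp
qed

lemma circuit_imp_n_pos:
  assumes "circular_with m n A l k" "is_circuit m n l k \<Gamma>"
  shows "n > 0"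
proof (rule ccontr)
  assume "\<not> n > 0"
  then have "arcs m n = {}"
    using assms(1) unfolding circular_with_def arcs_def by fastforce
  then show False
    using assms(2) unfolding is_circuit_def by (cases \<Gamma>) auto
qed

section \<open>Validity of the \<Gamma>-inequalities\<close>

lemma convex_Q: "convex (Q m n A b)"
proof -
  have eq: "Q m n A b = (\<Inter>j\<in>- {1..n}. {x. x j = 0})
      \<inter> (\<Inter>i\<in>{1..m}. {x. of_int (b i) \<le> (\<Sum>j\<in>{1..n}. A i j * x j)})
      \<inter> (\<Inter>j\<in>{1..n}. {x. 0 \<le> (\<Sum>j'\<in>{j}. 1 * x j')})"
    unfolding Q_def Rn_def by auto
  show ?thesis
    unfolding eq by (intro convex_Int convex_INT ballI convex_halfspace_weighted_sum convex_coordinate_eq)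
qed

lemma Qstar_subset_Q: "Qstar m n A b \<subseteq> Q m n A b"
  unfolding Qstar_def conv_eq_convex_hull by (rule hull_minimal) (auto simp: convex_Q)

lemma row_sum_eq_jump_sum:
  assumes "circular_with m n A l k" "i \<in> {1..m}"
  shows "(\<Sum>j=1..n. A i j * x j) = jump_sum n l k x (Row i)"
proof -
  have "(\<Sum>j=1..n. A i j * x j) = (\<Sum>j=1..n. if int j \<in> cint n (int (l i)) (k i) then x j else 0)"
    using assms unfolding circular_with_def by (intro sum.cong) auto
  also have "\<dots> = (\<Sum>j\<in>{j\<in>{1..n}. int j \<in> cint n (int (l i)) (k i)}. x j)"
    by (rule sum.inter_filter[symmetric]) simp
  finally show ?thesis
    unfolding jump_sum_def by simp
qed

lemma jump_sum_ge:
  assumes circ: "circular_with m n A l k" and x: "x \<in> Q m n A b" and a: "a \<in> arcs m n"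
  shows "of_int (fwd_b b a + rev_b b a) \<le> jump_sum n l k x a"
proof -
  have rows: "\<forall>i\<in>{1..m}. of_int (b i) \<le> jump_sum n l k x (Row i)" and nonneg: "\<forall>j\<in>{1..n}. 0 \<le> x j"
    using x row_sum_eq_jump_sum[OF circ] unfolding Q_def by auto
  show ?thesis
    using a rows nonneg unfolding arcs_def
    by (auto simp: jump_sum_Short jump_sum_RevShort jump_sum_RevRow)
qed

definition forward_sum :: "nat \<Rightarrow> (nat \<Rightarrow> nat) \<Rightarrow> (nat \<Rightarrow> nat) \<Rightarrow> (nat \<Rightarrow> real) \<Rightarrow> arc list \<Rightarrow> real" where
  "forward_sum n l k x \<Gamma> = (\<Sum>a\<leftarrow>\<Gamma>. if is_reverse a then 0 else jump_sum n l k x a)"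

definition reverse_sum :: "nat \<Rightarrow> (nat \<Rightarrow> nat) \<Rightarrow> (nat \<Rightarrow> nat) \<Rightarrow> (nat \<Rightarrow> real) \<Rightarrow> arc list \<Rightarrow> real" where
  "reverse_sum n l k x \<Gamma> = (\<Sum>a\<leftarrow>\<Gamma>. if is_reverse a then jump_sum n l k x a else 0)"

lemma sum_pminus: "(\<Sum>j=1..n. of_nat (pminus n l k \<Gamma> j) * x j) = reverse_sum n l k x \<Gamma>"
  unfolding pminus_def reverse_sum_def
proof (induction \<Gamma>)
  case (Cons a \<Gamma>)
  have "(\<Sum>j=1..n. (if is_reverse a \<and> jumps n l k a j then 1 else 0) * x j)
      = (\<Sum>j=1..n. if is_reverse a \<and> jumps n l k a j then x j else 0)"
    by (intro sum.cong) simp_all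
  also have "\<dots> = (\<Sum>j\<in>{j\<in>{1..n}. is_reverse a \<and> jumps n l k a j}. x j)"
    by (rule sum.inter_filter[symmetric]) simp
  also have "\<dots> = (if is_reverse a then jump_sum n l k x a else 0)"
    unfolding jump_sum_def by simp
  finally have head: "(\<Sum>j=1..n. (if is_reverse a \<and> jumps n l k a j then 1 else 0) * x j)
      = (if is_reverse a then jump_sum n l k x a else 0)" .
  have "(\<Sum>j=1..n. of_nat (length (filter (\<lambda>a. is_reverse a \<and> jumps n l k a j) (a # \<Gamma>))) * x j)
      = (\<Sum>j=1..n. (if is_reverse a \<and> jumps n l k a j then 1 else 0) * x j
          + of_nat (length (filter (\<lambda>a. is_reverse a \<and> jumps n l k a j) \<Gamma>)) * x j)"
    by (intro sum.cong) (simp_all add: algebra_simps)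
  then show ?case
    using Cons head by (simp add: sum.distrib)
qed simp

lemma forward_sum_ge:
  assumes "circular_with m n A l k" "x \<in> Q m n A b" "is_circuit m n l k \<Gamma>"
  shows "of_int (\<Sum>a\<leftarrow>\<Gamma>. fwd_b b a) \<le> forward_sum n l k x \<Gamma>"
  unfolding forward_sum_def sum_list_of_int[symmetric] map_map
proof (rule sum_list_mono)
  fix a assume "a \<in> set \<Gamma>"
  then have "a \<in> arcs m n"
    using assms(3) unfolding is_circuit_def by auto
  then show "(of_int \<circ> fwd_b b) a \<le> (if is_reverse a then 0 else jump_sum n l k x a)"
    using jump_sum_ge[OF assms(1,2)] by (cases a) fastforce+
qed

lemma reverse_sum_ge:
  assumes "circular_with m n A l k" "x \<in> Q m n A b" "is_circuit m n l k \<Gamma>"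
  shows "of_int (\<Sum>a\<leftarrow>\<Gamma>. rev_b b a) \<le> reverse_sum n l k x \<Gamma>"
  unfolding reverse_sum_def sum_list_of_int[symmetric] map_map
proof (rule sum_list_mono)
  fix a assume "a \<in> set \<Gamma>"
  then have "a \<in> arcs m n"
    using assms(3) unfolding is_circuit_def by auto
  then show "(of_int \<circ> rev_b b) a \<le> (if is_reverse a then jump_sum n l k x a else 0)"
    using jump_sum_ge[OF assms(1,2)] by (cases a) fastforce+
qed

lemma circuit_balance:
  assumes n: "n > 0" and circ: "circular_with m n A l k" and C: "is_circuit m n l k \<Gamma>"
    and x: "x \<in> Rn n"
  shows "forward_sum n l k x \<Gamma> - reverse_sum n l k x \<Gamma> = of_int (winding n k \<Gamma>) * (\<Sum>j=1..n. x j)"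
proof -
  have "forward_sum n l k x \<Gamma> - reverse_sum n l k x \<Gamma> = (\<Sum>a\<leftarrow>\<Gamma>. arc_sign a * jump_sum n l k x a)"
    unfolding forward_sum_def reverse_sum_def sum_list_subtractf[symmetric]
    by (intro arg_cong[where f = sum_list] map_cong) (simp_all add: arc_sign_def)
  also have "\<dots> = (\<Sum>a\<leftarrow>\<Gamma>. prefix_potential n x (tail n l k a + arc_len k a)
                          - prefix_potential n x (tail n l k a))"
    using C prefix_potential_step[OF n x] arc_sign_jump_sum[OF n circ]
    unfolding is_circuit_def by (intro arg_cong[where f = sum_list] map_cong) auto
  also have "\<dots> = of_int (winding n k \<Gamma>) * (\<Sum>j=1..n. x j)"
    by (rule circuit_sum_quasi_periodic[OF n C quasi_periodic_prefix_potential[OF n]])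
  finally show ?thesis .
qed

lemma beta_eq_div: "beta n k b \<Gamma> = tval b \<Gamma> div winding n k \<Gamma>"
  unfolding beta_def by (rule floor_divide_of_int_eq)

lemma rval_eq_mod: "rval n k b \<Gamma> = tval b \<Gamma> mod winding n k \<Gamma>"
  unfolding rval_def beta_eq_div by (simp add: minus_div_mult_eq_mod)

lemma rval_bounds:
  assumes "winding n k \<Gamma> > 0"
  shows "0 \<le> rval n k b \<Gamma>" "rval n k b \<Gamma> < winding n k \<Gamma>"
    "tval b \<Gamma> = beta n k b \<Gamma> * winding n k \<Gamma> + rval n k b \<Gamma>"
  using assms by (simp_all add: rval_eq_mod beta_eq_div)

lemma gamma_ineq_iff:
  "gamma_ineq n l k b \<Gamma> x \<longleftrightarrow>
     of_int (rval n k b \<Gamma> * (beta n k b \<Gamma> + 1) + (\<Sum>a\<leftarrow>\<Gamma>. rev_b b a))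
       \<le> reverse_sum n l k x \<Gamma> + of_int (rval n k b \<Gamma>) * (\<Sum>j=1..n. x j)"
  unfolding gamma_ineq_def sum_pminus[symmetric]
  by (simp add: distrib_right sum.distrib sum_distrib_left)

text \<open>Here P, R, t + R and \<sigma> stand for the reverse jump sum of \<Gamma> at an integral point, its
  lower bound, the lower bound of the forward jump sum and the coordinate sum, and t = \<beta> p + r
  is the division with remainder.\<close>
lemma gamma_bound_integral:
  fixes P :: real
  assumes "of_int R \<le> P" "of_int (t + R) - of_int p * of_int \<sigma> \<le> P"
    and "t = \<beta> * p + r" "0 \<le> r" "r < p"
  shows "of_int (r * (\<beta> + 1) + R) \<le> P + of_int r * of_int \<sigma>"
proof (cases "\<beta> + 1 \<le> \<sigma>")
  case True
  then have "r * (\<beta> + 1) \<le> r * \<sigma>"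
    using assms(4) by (intro mult_left_mono)
  then have "real_of_int (r * (\<beta> + 1)) \<le> of_int r * of_int \<sigma>"
    by (metis of_int_le_iff of_int_mult)
  then show ?thesis
    using assms(1) by simp
next
  case False
  then have "(p - r) * \<sigma> \<le> (p - r) * \<beta>"
    using assms(5) by (intro mult_left_mono) auto
  then have "real_of_int ((p - r) * \<sigma>) \<le> of_int ((p - r) * \<beta>)"
    by (simp only: of_int_le_iff)
  then show ?thesis
    using assms(2,3) by (simp add: algebra_simps)
qed

lemma gamma_ineq_integral_point:
  assumes circ: "circular_with m n A l k" and y: "y \<in> Q m n A b \<inter> integral_points n"
    and C: "is_circuit m n l k \<Gamma>" and p: "winding n k \<Gamma> > 0"
  shows "gamma_ineq n l k b \<Gamma> y"
proof -
  have n: "n > 0"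
    by (rule circuit_imp_n_pos[OF circ C])
  have "(\<Sum>j=1..n. y j) \<in> \<int>"
    using y unfolding integral_points_def by (intro Ints_sum) auto
  then obtain \<sigma> where \<sigma>: "(\<Sum>j=1..n. y j) = of_int \<sigma>"
    by (auto elim: Ints_cases)
  have yQ: "y \<in> Q m n A b" and "y \<in> Rn n"
    using y unfolding Q_def by auto
  then have "forward_sum n l k y \<Gamma> - reverse_sum n l k y \<Gamma> = of_int (winding n k \<Gamma>) * of_int \<sigma>"
    using circuit_balance[OF n circ C] \<sigma> by simp
  then have "of_int (tval b \<Gamma> + (\<Sum>a\<leftarrow>\<Gamma>. rev_b b a)) - of_int (winding n k \<Gamma>) * of_int \<sigma>
      \<le> reverse_sum n l k y \<Gamma>"
    using forward_sum_ge[OF circ yQ C] unfolding tval_def by simp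
  then show ?thesis
    unfolding gamma_ineq_iff \<sigma>
    using gamma_bound_integral[OF reverse_sum_ge[OF circ yQ C]] rval_bounds[OF p] by blast
qed

lemma Qstar_gamma_ineq:
  assumes "circular_with m n A l k" "x \<in> Qstar m n A b"
    and "is_circuit m n l k \<Gamma>" "winding n k \<Gamma> > 0"
  shows "gamma_ineq n l k b \<Gamma> x"
proof -
  have "Qstar m n A b \<subseteq> {x. gamma_ineq n l k b \<Gamma> x}"
    unfolding Qstar_def conv_eq_convex_hull gamma_ineq_def
    using gamma_ineq_integral_point[OF assms(1) _ assms(3,4)]
    by (intro hull_minimal convex_halfspace_weighted_sum) (auto simp: gamma_ineq_def)
  then show ?thesis
    using assms(2) by blast
qed

section \<open>Points with integral coordinate sum\<close>

definition circ_constraints ::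
    "nat \<Rightarrow> nat \<Rightarrow> (nat \<Rightarrow> nat) \<Rightarrow> (nat \<Rightarrow> nat) \<Rightarrow> (nat \<Rightarrow> int) \<Rightarrow> int \<Rightarrow> (int \<times> int \<times> int) set" where
  "circ_constraints m n l k b \<sigma> =
     {(int j - 1, int j, 0) | j. j \<in> {1..n}} \<union>
     {(int (l i) - 1, int (l i) - 1 + int (k i), b i) | i. i \<in> {1..m}} \<union>
     {(z, z + int n, \<sigma>) | z. True} \<union> {(z + int n, z, - \<sigma>) | z. True}"

lemma circ_constraints_quasi_periodic:
  assumes "diff_feasible (circ_constraints m n l k b \<sigma>) Z"
  shows "quasi_periodic n (of_int \<sigma>) Z"
proof -
  have "(z, z + int n, \<sigma>) \<in> circ_constraints m n l k b \<sigma>"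
    "(z + int n, z, - \<sigma>) \<in> circ_constraints m n l k b \<sigma>" for z
    unfolding circ_constraints_def by blast+
  then have "of_int \<sigma> \<le> Z (z + int n) - Z z" "of_int (- \<sigma>) \<le> Z z - Z (z + int n)" for z
    using diff_feasibleD[OF assms] by blast+
  then show ?thesis
    unfolding quasi_periodic_def by (simp add: eq_iff algebra_simps)
qed

lemma diff_feasible_prefix_potential:
  assumes n: "n > 0" and circ: "circular_with m n A l k" and x: "x \<in> Q m n A b"
    and \<sigma>: "(\<Sum>j=1..n. x j) = of_int \<sigma>"
  shows "diff_feasible (circ_constraints m n l k b \<sigma>) (prefix_potential n x)"
proof -
  have xR: "x \<in> Rn n" and rows: "\<forall>i\<in>{1..m}. of_int (b i) \<le> (\<Sum>j=1..n. A i j * x j)"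
    and nonneg: "\<forall>j\<in>{1..n}. 0 \<le> x j"
    using x unfolding Q_def by auto
  have step: "\<forall>z. prefix_potential n x z - prefix_potential n x (z - 1) = x (nat (wrap n z))"
    using prefix_potential_step[OF n xR] by blast
  have per: "quasi_periodic n (of_int \<sigma>) (prefix_potential n x)"
    using quasi_periodic_prefix_potential[OF n, of x] \<sigma> by simp
  show ?thesis
    unfolding diff_feasible_def circ_constraints_def
  proof (clarify; elim UnE CollectE exE conjE)
    fix z1 z2 c :: int and j assume "(z1, z2, c) = (int j - 1, int j, 0)" "j \<in> {1..n}"
    then show "of_int c \<le> prefix_potential n x z2 - prefix_potential n x z1"
      using prefix_potential_diff[of j n x] nonneg by auto
  next
    fix z1 z2 c :: int and i assume "(z1, z2, c) = (int (l i) - 1, int (l i) - 1 + int (k i), b i)" "i \<in> {1..m}"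
    then show "of_int c \<le> prefix_potential n x z2 - prefix_potential n x z1"
      using rows jump_sum_Row[OF n circ _ step] row_sum_eq_jump_sum[OF circ] by auto
  next
    fix z1 z2 c z :: int assume "(z1, z2, c) = (z, z + int n, \<sigma>)"
    then show "of_int c \<le> prefix_potential n x z2 - prefix_potential n x z1"
      using per unfolding quasi_periodic_def by auto
  next
    fix z1 z2 c z :: int assume "(z1, z2, c) = (z + int n, z, - \<sigma>)"
    then show "of_int c \<le> prefix_potential n x z2 - prefix_potential n x z1"
      using per unfolding quasi_periodic_def by auto
  qed
qed

lemma increments_integral_feasible:
  assumes n: "n > 0" and circ: "circular_with m n A l k"
    and Z: "diff_feasible (circ_constraints m n l k b \<sigma>) Z" "\<forall>z. Z z \<in> \<int>"
  shows "increments n Z \<in> Q m n A b \<inter> integral_points n"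
proof -
  have per: "quasi_periodic n (of_int \<sigma>) Z"
    by (rule circ_constraints_quasi_periodic[OF Z(1)])
  note cons = diff_feasibleD[OF Z(1)]
  have step: "\<forall>z. Z z - Z (z - 1) = increments n Z (nat (wrap n z))"
    using increments_wrap[OF n per] by blast
  have "0 \<le> increments n Z j" if "j \<in> {1..n}" for j
    using cons[of "int j - 1" "int j" 0] that unfolding increments_def circ_constraints_def by auto
  moreover have "of_int (b i) \<le> (\<Sum>j=1..n. A i j * increments n Z j)" if "i \<in> {1..m}" for i
    using cons[of "int (l i) - 1" "int (l i) - 1 + int (k i)" "b i"] that
      row_sum_eq_jump_sum[OF circ that] jump_sum_Row[OF n circ that step]
    unfolding circ_constraints_def by auto
  moreover have "increments n Z j \<in> \<int>" for j
    using Z(2) unfolding increments_def by auto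
  moreover have "increments n Z \<in> Rn n"
    unfolding increments_def Rn_def by simp
  ultimately show ?thesis
    unfolding Q_def integral_points_def by blast
qed

lemma Q_integral_sum_in_Qstar:
  assumes n: "n > 0" and circ: "circular_with m n A l k" and x: "x \<in> Q m n A b"
    and \<sigma>: "(\<Sum>j=1..n. x j) = of_int \<sigma>"
  shows "x \<in> Qstar m n A b"
proof -
  let ?T = "{Z. diff_feasible (circ_constraints m n l k b \<sigma>) Z \<and> (\<forall>z. Z z \<in> \<int>)}"
  have feasible: "diff_feasible (circ_constraints m n l k b \<sigma>) (prefix_potential n x)"
    by (rule diff_feasible_prefix_potential[OF n circ x \<sigma>])
  have "finite (fracs (prefix_potential n x))"
    by (rule finite_fracs_quasi_periodic[OF n circ_constraints_quasi_periodic[OF feasible]])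
  then have "prefix_potential n x \<in> convex hull ?T"
    by (rule diff_feasible_in_convex_hull_integral[OF feasible])
  then have "increments n (prefix_potential n x) \<in> increments n ` (convex hull ?T)"
    by (rule imageI)
  also have "\<dots> = convex hull (increments n ` ?T)"
    by (rule convex_hull_linear_image[OF linear_increments])
  also have "\<dots> \<subseteq> convex hull (Q m n A b \<inter> integral_points n)"
    by (rule hull_mono) (use increments_integral_feasible[OF n circ] in blast)
  finally show ?thesis
    using x unfolding Qstar_def conv_eq_convex_hull by (simp add: increments_prefix_potential Q_def)
qed

section \<open>Potentials in digraphs without negative cycles\<close>

fun walk :: "('e \<Rightarrow> 'v) \<Rightarrow> ('e \<Rightarrow> 'v) \<Rightarrow> 'e list \<Rightarrow> bool" where
  "walk T H [] = True"
| "walk T H [a] = True"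
| "walk T H (a # b # xs) = (H a = T b \<and> walk T H (b # xs))"

lemma walk_append:
  "walk T H (xs @ ys) \<longleftrightarrow> walk T H xs \<and> walk T H ys \<and> (xs \<noteq> [] \<and> ys \<noteq> [] \<longrightarrow> H (last xs) = T (hd ys))"
proof (induction xs)
  case (Cons a xs)
  then show ?case
    by (cases xs; cases ys) auto
qed simp

lemma walk_nth: "walk T H xs \<Longrightarrow> Suc s < length xs \<Longrightarrow> H (xs ! s) = T (xs ! Suc s)"
proof (induction T H xs arbitrary: s rule: walk.induct)
  case (3 T H a b xs)
  then show ?case
    by (cases s) auto
qed auto

definition simple_cycle :: "'e set \<Rightarrow> ('e \<Rightarrow> 'v) \<Rightarrow> ('e \<Rightarrow> 'v) \<Rightarrow> 'e list \<Rightarrow> bool" where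
  "simple_cycle E T H C \<longleftrightarrow> C \<noteq> [] \<and> set C \<subseteq> E \<and> distinct C \<and>
     (\<forall>s < length C. H (C ! s) = T (C ! ((s + 1) mod length C))) \<and> distinct (map T C)"

lemma closest_repeated_tail:
  assumes "\<not> distinct (map T ws)"
  obtains i d where "0 < d" "i + d < length ws" "T (ws ! i) = T (ws ! (i + d))"
    "distinct (map T (take d (drop i ws)))"
proof -
  define P where "P d \<longleftrightarrow> (\<exists>i. 0 < d \<and> i + d < length ws \<and> T (ws ! i) = T (ws ! (i + d)))" for d
  obtain i j where "i < j" "j < length ws" "T (ws ! i) = T (ws ! j)"
    using assms unfolding distinct_conv_nth by (metis length_map linorder_neq_iff nth_map)
  then have "P (j - i)"
    unfolding P_def by (intro exI[of _ i]) auto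
  then obtain d where Pd: "P d" and min: "\<And>d'. d' < d \<Longrightarrow> \<not> P d'"
    using exists_least_iff[of P] by blast
  then obtain i where i: "0 < d" "i + d < length ws" "T (ws ! i) = T (ws ! (i + d))"
    unfolding P_def by blast
  have neq: "T (ws ! (i + s1)) \<noteq> T (ws ! (i + s2))" if "s1 < s2" "s2 < d" for s1 s2
  proof
    assume "T (ws ! (i + s1)) = T (ws ! (i + s2))"
    then have "P (s2 - s1)"
      unfolding P_def using that i by (intro exI[of _ "i + s1"]) auto
    moreover have "s2 - s1 < d"
      using that by auto
    ultimately show False
      using min by blast
  qed
  have "distinct (map T (take d (drop i ws)))"
    unfolding distinct_conv_nth
  proof (intro allI impI)
    fix s1 s2 assume s: "s1 < length (map T (take d (drop i ws)))"
      "s2 < length (map T (take d (drop i ws)))" "s1 \<noteq> s2"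
    then show "map T (take d (drop i ws)) ! s1 \<noteq> map T (take d (drop i ws)) ! s2"
      using neq[of s1 s2] neq[of s2 s1] i by (auto simp: linorder_neq_iff)
  qed
  then show ?thesis
    using that i by blast
qed

lemma walk_split_simple_cycle:
  assumes E: "set ws \<subseteq> E" and W: "walk T H ws" and nd: "\<not> distinct (map T ws)"
  obtains A C B where "ws = A @ C @ B" "B \<noteq> []" "simple_cycle E T H C" "walk T H (A @ B)"
proof -
  obtain i d where i: "0 < d" "i + d < length ws" "T (ws ! i) = T (ws ! (i + d))"
    and dist: "distinct (map T (take d (drop i ws)))"
    using closest_repeated_tail[OF nd] .
  define A C B where "A = take i ws" and "C = take d (drop i ws)" and "B = drop (i + d) ws"
  have ws: "ws = A @ C @ B"
    unfolding A_def B_def C_def by (metis add.commute append_take_drop_id drop_drop)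
  have B: "B \<noteq> []" "hd B = ws ! (i + d)"
    unfolding B_def using i by (auto simp: hd_drop_conv_nth)
  have C: "C \<noteq> []" "hd C = ws ! i" "length C = d"
    unfolding C_def using i by (auto simp: hd_conv_nth)
  have walks: "walk T H C" "H (last C) = T (hd B)" "walk T H (A @ B)"
    using W B C i(3) unfolding ws walk_append by auto
  have "simple_cycle E T H C"
    unfolding simple_cycle_def
  proof (intro conjI allI impI)
    show "C \<noteq> []"
      by (rule C(1))
    show "set C \<subseteq> E"
      using E unfolding C_def by (meson in_set_dropD in_set_takeD subset_iff)
    show "distinct (map T C)" "distinct C"
      using dist unfolding C_def by (simp_all add: distinct_map)
    fix s assume s: "s < length C"
    show "H (C ! s) = T (C ! ((s + 1) mod length C))"
    proof (cases "Suc s < length C")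
      case True
      then show ?thesis
        using walk_nth[OF walks(1) True] by simp
    next
      case False
      then have "Suc s = length C"
        using s by simp
      then have "s = length C - 1" "(s + 1) mod length C = 0"
        by auto
      then show ?thesis
        using walks(2) B(2) C i(3) by (simp add: last_conv_nth hd_conv_nth)
    qed
  qed
  then show ?thesis
    using that ws B(1) walks(3) by blast
qed

lemma walk_shortening:
  fixes w :: "'e \<Rightarrow> real"
  assumes V: "finite V" "T ` E \<subseteq> V"
    and nonneg: "\<forall>C. simple_cycle E T H C \<longrightarrow> 0 \<le> (\<Sum>a\<leftarrow>C. w a)"
    and ws: "set ws \<subseteq> E" "walk T H ws" "ws \<noteq> []"
  obtains ws' where "set ws' \<subseteq> E" "walk T H ws'" "length ws' \<le> card V" "ws' \<noteq> []"
    "H (last ws') = H (last ws)" "(\<Sum>a\<leftarrow>ws'. w a) \<le> (\<Sum>a\<leftarrow>ws. w a)"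
  using ws
proof (induction "length ws" arbitrary: ws thesis rule: less_induct)
  case less
  show ?case
  proof (cases "distinct (map T ws)")
    case True
    have "card (set (map T ws)) \<le> card V"
      using less.prems(2) V by (intro card_mono) auto
    then have "length ws \<le> card V"
      using True distinct_card by fastforce
    then show ?thesis
      using less.prems by blast
  next
    case False
    obtain A C B where split: "ws = A @ C @ B" "B \<noteq> []" "simple_cycle E T H C" "walk T H (A @ B)"
      using walk_split_simple_cycle[OF less.prems(2,3) False] .
    have "length (A @ B) < length ws" "set (A @ B) \<subseteq> E"
      using split(1,3) less.prems(2) unfolding simple_cycle_def by auto
    moreover have "(\<Sum>a\<leftarrow>A @ B. w a) \<le> (\<Sum>a\<leftarrow>ws. w a)" "last (A @ B) = last ws"
      using nonneg split by auto
    ultimately show ?thesis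
      using less.hyps[of "A @ B"] less.prems(1) split(2,4) by (metis append_is_Nil_conv order.trans)
  qed
qed

text \<open>Without negative cycles, \<pi> v can be taken as the least weight of a walk of length at most
  the number of nodes ending in v, the empty walk included.\<close>
lemma potential_exists:
  fixes w :: "'e \<Rightarrow> real"
  assumes E: "finite E" and nonneg: "\<forall>C. simple_cycle E T H C \<longrightarrow> 0 \<le> (\<Sum>a\<leftarrow>C. w a)"
  obtains \<pi> where "\<forall>a\<in>E. \<pi> (H a) \<le> \<pi> (T a) + w a"
proof -
  define V where "V = T ` E"
  define W where "W v = {ws. set ws \<subseteq> E \<and> walk T H ws \<and> length ws \<le> card V \<and> (ws = [] \<or> H (last ws) = v)}" for v
  have finW: "finite (W v)" for v
    by (rule finite_subset[OF _ finite_lists_length_le[OF E, of "card V"]]) (auto simp: W_def)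
  define \<pi> where "\<pi> v = Min ((\<lambda>ws. \<Sum>a\<leftarrow>ws. w a) ` W v)" for v
  have \<pi>_le: "\<pi> v \<le> (\<Sum>a\<leftarrow>ws. w a)" if "ws \<in> W v" for ws v
    unfolding \<pi>_def using finW that by (intro Min_le) auto
  have \<pi>_in: "\<exists>ws\<in>W v. \<pi> v = (\<Sum>a\<leftarrow>ws. w a)" for v
  proof -
    have "[] \<in> W v"
      unfolding W_def by simp
    then have "\<pi> v \<in> (\<lambda>ws. \<Sum>a\<leftarrow>ws. w a) ` W v"
      unfolding \<pi>_def using finW by (intro Min_in) auto
    then show ?thesis
      by auto
  qed
  have "\<pi> (H a) \<le> \<pi> (T a) + w a" if a: "a \<in> E" for a
  proof -
    obtain ws where ws: "ws \<in> W (T a)" "\<pi> (T a) = (\<Sum>a\<leftarrow>ws. w a)"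
      using \<pi>_in by blast
    have "set (ws @ [a]) \<subseteq> E" "walk T H (ws @ [a])"
      using ws(1) a unfolding W_def walk_append by auto
    then obtain ws' where ws': "set ws' \<subseteq> E" "walk T H ws'" "length ws' \<le> card V" "ws' \<noteq> []"
      "H (last ws') = H a" "(\<Sum>a\<leftarrow>ws'. w a) \<le> (\<Sum>a\<leftarrow>ws @ [a]. w a)"
      using walk_shortening[of V T E H w "ws @ [a]"] E nonneg unfolding V_def by auto
    then have "ws' \<in> W (H a)"
      unfolding W_def by auto
    then show ?thesis
      using \<pi>_le ws'(6) ws(2) by fastforce
  qed
  then show ?thesis
    using that by blast
qed

section \<open>Points with fractional coordinate sum\<close>

lemma is_circuit_iff_simple_cycle: "is_circuit m n l k \<Gamma> \<longleftrightarrow> simple_cycle (arcs m n) (tail n l k) (head n l k) \<Gamma>"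
  unfolding is_circuit_def simple_cycle_def by simp

lemma div_mod_of_strict_remainder:
  fixes t p \<beta> :: int
  assumes "0 < t - p * \<beta>" "t - p * \<beta> < p"
  shows "2 \<le> p" "t div p = \<beta>" "t mod p = t - p * \<beta>" "\<not> p dvd t"
proof -
  show "2 \<le> p"
    using assms by linarith
  show "t div p = \<beta>" "t mod p = t - p * \<beta>"
    using assms int_div_pos_eq[of t p \<beta> "t - p * \<beta>"] int_mod_pos_eq[of t p \<beta> "t - p * \<beta>"]
    by simp_all
  then show "\<not> p dvd t"
    using assms(1) by (simp add: dvd_eq_mod_eq_0)
qed

text \<open>Here P is the slack of the reverse jump sum of a circuit at x and s = \<beta> + f the
  coordinate sum of x; the \<Gamma>-inequality supplies the last hypothesis.\<close>
lemma fractional_gamma_bound: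
  fixes P s f :: real
  assumes "0 \<le> P" "of_int t - of_int p * s \<le> P" "0 < f" "f < 1" "s = of_int \<beta> + f"
    and "0 < t - p * \<beta> \<Longrightarrow> t - p * \<beta> < p \<Longrightarrow> of_int (t - p * \<beta>) * (1 - f) \<le> P"
  shows "(1 - f) * of_int (t - p * \<beta>) \<le> P"
proof -
  define D where "D = t - p * \<beta>"
  have P: "of_int D - of_int p * f \<le> P"
    using assms(2,5) unfolding D_def by (simp add: algebra_simps)
  consider "D \<le> 0" | "0 < D" "p \<le> 0" | "0 < p" "p \<le> D" | "0 < D" "D < p"
    by linarith
  then have "(1 - f) * of_int D \<le> P"
  proof cases
    case 1
    then show ?thesis
      using assms(1,4) by (smt (verit) mult_nonneg_nonpos of_int_le_0_iff)
  next
    case 2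
    then have "of_int p * f \<le> 0"
      using assms(3) by (simp add: mult_nonpos_nonneg)
    then show ?thesis
      using P 2 assms(3) by (smt (verit) mult_le_cancel_right1 of_int_pos)
  next
    case 3
    then have "f * of_int p \<le> f * of_int D"
      using assms(3) by (intro mult_left_mono) auto
    then show ?thesis
      using P by (simp add: algebra_simps)
  next
    case 4
    then show ?thesis
      using assms(6) unfolding D_def by (simp add: mult.commute)
  qed
  then show ?thesis
    unfolding D_def .
qed

text \<open>With s the coordinate sum of x and f = frac s, the weights are chosen so that the
  increments v of the quasi-periodic extension, with period f (\<lfloor>s\<rfloor> + 1), of a potential \<pi> with
  \<pi> (head a) \<le> \<pi> (tail a) + split_weight a satisfy f b \<le> A v \<le> A x - (1 - f) b and 0 \<le> v \<le> x.\<close>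
definition split_weight :: "nat \<Rightarrow> (nat \<Rightarrow> nat) \<Rightarrow> (nat \<Rightarrow> nat) \<Rightarrow> (nat \<Rightarrow> int) \<Rightarrow> (nat \<Rightarrow> real) \<Rightarrow> arc \<Rightarrow> real" where
  "split_weight n l k b x a =
     (let s = \<Sum>j=1..n. x j in
      (if is_reverse a then 0 else jump_sum n l k x a) - (1 - frac s) * of_int (fwd_b b a)
        - frac s * of_int (rev_b b a) - frac s * (of_int \<lfloor>s\<rfloor> + 1) * of_int (arc_turns n l k a))"

lemma sum_split_weight:
  fixes x :: "nat \<Rightarrow> real" and n :: nat and b :: "nat \<Rightarrow> int" and \<Gamma> :: "arc list"
  defines "s \<equiv> \<Sum>j=1..n. x j" and "R \<equiv> \<Sum>a\<leftarrow>\<Gamma>. rev_b b a"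
  assumes "n > 0" "is_circuit m n l k \<Gamma>"
  shows "(\<Sum>a\<leftarrow>\<Gamma>. split_weight n l k b x a) = forward_sum n l k x \<Gamma>
    - (1 - frac s) * of_int (tval b \<Gamma> + R) - frac s * of_int R
    - frac s * (of_int \<lfloor>s\<rfloor> + 1) * of_int (winding n k \<Gamma>)"
  using winding_eq_sum_arc_turns[OF assms(3,4)]
  unfolding split_weight_def forward_sum_def tval_def s_def R_def Let_def
  by (simp add: sum_list_subtractf sum_list_const_mult comp_def flip: sum_list_of_int)

lemma circuit_split_weight_nonneg:
  assumes n: "n > 0" and circ: "circular_with m n A l k" and x: "x \<in> Q m n A b"
    and frac: "frac (\<Sum>j=1..n. x j) \<noteq> 0"
    and gamma: "\<forall>\<Gamma>. is_circuit m n l k \<Gamma> \<and> winding n k \<Gamma> \<ge> 2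
                   \<and> \<not> winding n k \<Gamma> dvd tval b \<Gamma> \<longrightarrow> gamma_ineq n l k b \<Gamma> x"
    and C: "is_circuit m n l k \<Gamma>"
  shows "0 \<le> (\<Sum>a\<leftarrow>\<Gamma>. split_weight n l k b x a)"
proof -
  define s where "s = (\<Sum>j=1..n. x j)"
  define \<beta> f where "\<beta> = \<lfloor>s\<rfloor>" and "f = frac s"
  define p t R where "p = winding n k \<Gamma>" and "t = tval b \<Gamma>" and "R = (\<Sum>a\<leftarrow>\<Gamma>. rev_b b a)"
  define P where "P = reverse_sum n l k x \<Gamma> - of_int R"
  have "f \<noteq> 0" "0 \<le> f" "f < 1" "s = of_int \<beta> + f"
    using frac unfolding f_def \<beta>_def s_def by (simp_all add: frac_lt_1) (simp add: frac_def)
  then have f: "0 < f" "f < 1" "s = of_int \<beta> + f"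
    by simp_all
  have "x \<in> Rn n"
    using x unfolding Q_def by simp
  then have balance: "forward_sum n l k x \<Gamma> = reverse_sum n l k x \<Gamma> + of_int p * s"
    using circuit_balance[OF n circ C] unfolding p_def s_def by (simp add: algebra_simps)
  have "(1 - f) * of_int (t - p * \<beta>) \<le> P"
  proof (rule fractional_gamma_bound[OF _ _ f])
    show "0 \<le> P" "of_int t - of_int p * s \<le> P"
      using reverse_sum_ge[OF circ x C] forward_sum_ge[OF circ x C] balance
      unfolding P_def R_def t_def tval_def by simp_all
    assume D: "0 < t - p * \<beta>" "t - p * \<beta> < p"
    note div_mod = div_mod_of_strict_remainder[OF D]
    have "gamma_ineq n l k b \<Gamma> x"
      using gamma C div_mod(1,4) unfolding p_def t_def by blast
    moreover have "beta n k b \<Gamma> = \<beta>" "rval n k b \<Gamma> = t - p * \<beta>"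
      using div_mod(2,3) unfolding beta_eq_div rval_eq_mod p_def t_def by simp_all
    ultimately show "of_int (t - p * \<beta>) * (1 - f) \<le> P"
      unfolding gamma_ineq_iff P_def R_def s_def[symmetric] using f(3) by (simp add: algebra_simps)
  qed
  then show ?thesis
    unfolding sum_split_weight[OF n C] s_def[symmetric] f_def[symmetric] \<beta>_def[symmetric]
      R_def[symmetric] t_def[symmetric] p_def[symmetric] P_def
    using balance f(3) by (simp add: algebra_simps)
qed

lemma exists_split_vector:
  assumes n: "n > 0" and circ: "circular_with m n A l k" and x: "x \<in> Q m n A b"
    and s_def: "s = (\<Sum>j=1..n. x j)" and frac: "frac s \<noteq> 0"
    and gamma: "\<forall>\<Gamma>. is_circuit m n l k \<Gamma> \<and> winding n k \<Gamma> \<ge> 2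
                   \<and> \<not> winding n k \<Gamma> dvd tval b \<Gamma> \<longrightarrow> gamma_ineq n l k b \<Gamma> x"
  obtains v where "v \<in> Rn n" "\<forall>j\<in>{1..n}. 0 \<le> v j \<and> v j \<le> x j"
    "\<forall>i\<in>{1..m}. frac s * of_int (b i) \<le> (\<Sum>j=1..n. A i j * v j)
                 \<and> (\<Sum>j=1..n. A i j * v j) \<le> (\<Sum>j=1..n. A i j * x j) - (1 - frac s) * of_int (b i)"
    "(\<Sum>j=1..n. v j) = frac s * (of_int \<lfloor>s\<rfloor> + 1)"
proof -
  define c where "c = frac s * (of_int \<lfloor>s\<rfloor> + 1)"
  have "\<forall>C. simple_cycle (arcs m n) (tail n l k) (head n l k) C \<longrightarrow>
      0 \<le> (\<Sum>a\<leftarrow>C. split_weight n l k b x a)"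
    using circuit_split_weight_nonneg[OF n circ x _ gamma] frac
    unfolding is_circuit_iff_simple_cycle s_def by blast
  then obtain \<pi> where \<pi>: "\<forall>a\<in>arcs m n. \<pi> (head n l k a) \<le> \<pi> (tail n l k a) + split_weight n l k b x a"
    using potential_exists[OF finite_arcs] by blast
  define v where "v = increments n (periodic_extension n c \<pi>)"
  have per: "quasi_periodic n c (periodic_extension n c \<pi>)"
    by (rule quasi_periodic_periodic_extension[OF n])
  have arc: "arc_sign a * jump_sum n l k v a \<le> (if is_reverse a then 0 else jump_sum n l k x a)
      - (1 - frac s) * of_int (fwd_b b a) - frac s * of_int (rev_b b a)" if a: "a \<in> arcs m n" for a
  proof -
    have "arc_sign a * jump_sum n l k v a
        = \<pi> (head n l k a) - \<pi> (tail n l k a) + c * of_int (arc_turns n l k a)"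
      using arc_sign_jump_sum[OF n circ a] increments_wrap[OF n per] periodic_extension_along_arc[OF n]
      unfolding v_def by presburger
    then show ?thesis
      using \<pi> a unfolding split_weight_def s_def[symmetric] c_def Let_def by fastforce
  qed
  show ?thesis
  proof
    show "v \<in> Rn n"
      unfolding v_def increments_def Rn_def by simp
    show "\<forall>j\<in>{1..n}. 0 \<le> v j \<and> v j \<le> x j"
    proof
      fix j assume j: "j \<in> {1..n}"
      then have "Short j \<in> arcs m n" "RevShort j \<in> arcs m n"
        unfolding arcs_def by auto
      then show "0 \<le> v j \<and> v j \<le> x j"
        using arc j by (fastforce simp: arc_sign_def jump_sum_Short jump_sum_RevShort)
    qed
    show "\<forall>i\<in>{1..m}. frac s * of_int (b i) \<le> (\<Sum>j=1..n. A i j * v j)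
                 \<and> (\<Sum>j=1..n. A i j * v j) \<le> (\<Sum>j=1..n. A i j * x j) - (1 - frac s) * of_int (b i)"
      using arc[of "Row _"] arc[of "RevRow _"] row_sum_eq_jump_sum[OF circ]
      by (auto simp: arcs_def arc_sign_def jump_sum_RevRow)
    show "(\<Sum>j=1..n. v j) = frac s * (of_int \<lfloor>s\<rfloor> + 1)"
      using sum_increments[OF per] unfolding v_def c_def .
  qed
qed

lemma Qstar_divideI:
  assumes n: "n > 0" and circ: "circular_with m n A l k"
    and y: "y \<in> Rn n" "\<forall>j\<in>{1..n}. 0 \<le> y j" "\<forall>i\<in>{1..m}. c * of_int (b i) \<le> (\<Sum>j=1..n. A i j * y j)"
    and c: "0 < c" and sum: "(\<Sum>j=1..n. y j) = c * of_int \<sigma>"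
  shows "(\<lambda>j. y j / c) \<in> Qstar m n A b"
proof (rule Q_integral_sum_in_Qstar[OF n circ])
  have "(\<Sum>j=1..n. A i j * (y j / c)) = (\<Sum>j=1..n. A i j * y j) / c" for i
    by (simp add: sum_divide_distrib)
  then show "(\<lambda>j. y j / c) \<in> Q m n A b"
    using y c unfolding Q_def Rn_def by (auto simp: pos_le_divide_eq mult.commute)
  show "(\<Sum>j=1..n. y j / c) = of_int \<sigma>"
    using sum c by (simp flip: sum_divide_distrib)
qed

lemma Q_fractional_sum_in_Qstar:
  assumes n: "n > 0" and circ: "circular_with m n A l k" and x: "x \<in> Q m n A b"
    and frac: "frac (\<Sum>j=1..n. x j) \<noteq> 0"
    and gamma: "\<forall>\<Gamma>. is_circuit m n l k \<Gamma> \<and> winding n k \<Gamma> \<ge> 2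
                   \<and> \<not> winding n k \<Gamma> dvd tval b \<Gamma> \<longrightarrow> gamma_ineq n l k b \<Gamma> x"
  shows "x \<in> Qstar m n A b"
proof -
  define s f where "s = (\<Sum>j=1..n. x j)" and "f = frac s"
  obtain v where v: "v \<in> Rn n" "\<forall>j\<in>{1..n}. 0 \<le> v j \<and> v j \<le> x j"
    "\<forall>i\<in>{1..m}. f * of_int (b i) \<le> (\<Sum>j=1..n. A i j * v j)
                 \<and> (\<Sum>j=1..n. A i j * v j) \<le> (\<Sum>j=1..n. A i j * x j) - (1 - f) * of_int (b i)"
    "(\<Sum>j=1..n. v j) = f * (of_int \<lfloor>s\<rfloor> + 1)"
    using exists_split_vector[OF n circ x s_def] frac gamma unfolding f_def s_def by blast
  have f: "0 < f" "f < 1"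
    using frac frac_lt_1[of s] frac_ge_0[of s] unfolding f_def s_def by auto
  have "x \<in> Rn n"
    using x unfolding Q_def by simp
  define x1 x2 where "x1 = (\<lambda>j. (x j - v j) / (1 - f))" and "x2 = (\<lambda>j. v j / f)"
  have "x1 \<in> Qstar m n A b"
    unfolding x1_def
  proof (rule Qstar_divideI[OF n circ])
    show "(\<lambda>j. x j - v j) \<in> Rn n"
      using \<open>x \<in> Rn n\<close> v(1) unfolding Rn_def by simp
    show "\<forall>i\<in>{1..m}. (1 - f) * of_int (b i) \<le> (\<Sum>j=1..n. A i j * (x j - v j))"
    proof
      fix i assume i: "i \<in> {1..m}"
      have "(\<Sum>j=1..n. A i j * (x j - v j)) = (\<Sum>j=1..n. A i j * x j) - (\<Sum>j=1..n. A i j * v j)"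
        by (simp add: right_diff_distrib sum_subtractf)
      then show "(1 - f) * of_int (b i) \<le> (\<Sum>j=1..n. A i j * (x j - v j))"
        using v(3)[rule_format, OF i] by linarith
    qed
    show "(\<Sum>j=1..n. x j - v j) = (1 - f) * of_int \<lfloor>s\<rfloor>"
      using v(4) unfolding s_def f_def by (simp add: sum_subtractf frac_def algebra_simps)
  qed (use f v(2) in auto)
  moreover have "x2 \<in> Qstar m n A b"
    unfolding x2_def by (rule Qstar_divideI[OF n circ, where \<sigma> = "\<lfloor>s\<rfloor> + 1"]) (use v f in auto)
  ultimately have "(1 - f) *\<^sub>R x1 + f *\<^sub>R x2 \<in> Qstar m n A b"
    using f unfolding Qstar_def conv_eq_convex_hull by (intro convexD[OF convex_convex_hull]) auto
  moreover have "(1 - f) *\<^sub>R x1 + f *\<^sub>R x2 = x"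
    using f unfolding x1_def x2_def by (simp add: fun_eq_iff)
  ultimately show ?thesis
    by simp
qed

lemma Q_gamma_ineqs_in_Qstar:
  assumes circ: "circular_with m n A l k" and x: "x \<in> Q m n A b"
    and gamma: "\<forall>\<Gamma>. is_circuit m n l k \<Gamma> \<and> winding n k \<Gamma> \<ge> 2
                   \<and> \<not> winding n k \<Gamma> dvd tval b \<Gamma> \<longrightarrow> gamma_ineq n l k b \<Gamma> x"
  shows "x \<in> Qstar m n A b"
proof -
  consider "n = 0" | "n > 0" "frac (\<Sum>j=1..n. x j) = 0" | "n > 0" "frac (\<Sum>j=1..n. x j) \<noteq> 0"
    by auto
  then show ?thesis
  proof cases
    case 1
    then have "x \<in> Q m n A b \<inter> integral_points n"
      using x unfolding integral_points_def Q_def by auto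
    then show ?thesis
      unfolding Qstar_def conv_eq_convex_hull by (rule hull_inc)
  next
    case 2
    then show ?thesis
      using Q_integral_sum_in_Qstar[OF _ circ x] by (auto simp: frac_eq_0_iff elim: Ints_cases)
  qed (use Q_fractional_sum_in_Qstar[OF _ circ x _ gamma] in blast)
qed

theorem theorem4p8:
  fixes m n :: nat and A :: "nat \<Rightarrow> nat \<Rightarrow> real" and l k :: "nat \<Rightarrow> nat"
    and b :: "nat \<Rightarrow> int"
  assumes circ: "circular_with m n A l k"
    and bnn: "\<forall>i\<in>{1..m}. b i \<ge> 0"
  shows "Qstar m n A b =
    {x \<in> Q m n A b. \<forall>\<Gamma>. is_circuit m n l k \<Gamma> \<and> winding n k \<Gamma> \<ge> 2
                          \<and> \<not> winding n k \<Gamma> dvd tval b \<Gamma> \<longrightarrow> gamma_ineq n l k b \<Gamma> x}"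
  using Qstar_subset_Q Qstar_gamma_ineq[OF circ] Q_gamma_ineqs_in_Qstar[OF circ] by fastforce

end
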